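(* Let $B\in\mathbb{R}^{n\times n}$ be symmetric, partitioned into $p\times p$ blocks $B_{st}\in\mathbb{R}^{n_s\times n_t}$, and let $\check B$ be its strictly block lower triangular part ($\check B_{st}=B_{st}$ if $s>t$, $0$ otherwise). If $\lambda_{\min}(B)<0$, then for every $\beta\in(0,\frac1{\rho(B)})$ the matrix $(I_n+\beta\check B)^{-1}B$ has at least one eigenvalue in $$\Omega=\{a+bi:\ a,b\in\mathbb{R},\ a\le 0,\ (a,b)\ne(0,0)\}.$$
   Context: $n_1,\dots,n_p$ are positive integers with $\sum_sn_s=n$; $\rho(B)$ denotes the spectral radius of $B$ and $\lambda_{\min}(B)$ its smallest eigenvalue. *)

theory Defs
  imports "Jordan_Normal_Form.Spectral_Radius" "Jordan_Normal_Form.Gauss_Jordan_Elimination"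
begin

text \<open>Block structure: the list ns = [n_1,...,n_p]; row/column index i (0-based)
  belongs to block s iff sum of n_r (r < s) <= i < sum of n_r (r <= s).\<close>
definition block_of :: "nat list \<Rightarrow> nat \<Rightarrow> nat" where
  "block_of ns i = (LEAST s. i < sum_list (take (Suc s) ns))"

definition block_lower :: "nat list \<Rightarrow> real mat \<Rightarrow> real mat" where
  "block_lower ns B = mat (dim_row B) (dim_col B)
     (\<lambda>(i,j). if block_of ns j < block_of ns i then B $$ (i,j) else 0)"

definition lambda_min :: "real mat \<Rightarrow> real" where
  "lambda_min B = Min {k. eigenvalue B k}"

definition Omega :: "complex set" where
  "Omega = {z. Re z \<le> 0 \<and> z \<noteq> 0}"

end

(* Write L for the strictly block lower triangular part of B and M = I + beta L, and suppose
   that every eigenvalue of A = M^-1 B has nonnegative real part.  By symmetry of B,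
   Re x*Bx = 2 Re x*Lx + sum_s x_s* B x_s over the diagonal blocks, and |x*Cx| <= rho(C) |x|^2
   for Hermitian C; hence Re x*Mx >= (1 - beta rho(B)) |x|^2 > 0, i.e. M is strictly accretive,
   and in particular invertible.  Now B = M A with B Hermitian, M strictly accretive and the
   spectrum of A in the closed right half plane.  A Schur triangularization A = S U S^-1 turns
   this into S*BS = (S*MS) U with U upper triangular, and a Schur complement at the first pivot
   preserves all three properties on a smaller index set.  By induction B is positive
   semidefinite, contradicting lambda_min(B) < 0.  The bound |x*Cx| <= rho(C) |x|^2 is the
   special case M = I, A = rho(C) I +- C of the same argument. *)

theory Submission
  imports Defs
begin

section \<open>Quadratic forms over an index set\<close>

definition quad_form :: "(nat \<Rightarrow> nat \<Rightarrow> complex) \<Rightarrow> nat set \<Rightarrow> (nat \<Rightarrow> complex) \<Rightarrow> complex" where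
  "quad_form A I x = (\<Sum>i\<in>I. \<Sum>j\<in>I. cnj (x i) * A i j * x j)"

definition sqnorm :: "nat set \<Rightarrow> (nat \<Rightarrow> complex) \<Rightarrow> real" where
  "sqnorm I x = (\<Sum>i\<in>I. (cmod (x i))\<^sup>2)"

definition hermitian :: "(nat \<Rightarrow> nat \<Rightarrow> complex) \<Rightarrow> nat set \<Rightarrow> bool" where
  "hermitian A I \<longleftrightarrow> (\<forall>i\<in>I. \<forall>j\<in>I. A j i = cnj (A i j))"

definition accretive :: "(nat \<Rightarrow> nat \<Rightarrow> complex) \<Rightarrow> nat set \<Rightarrow> bool" where
  "accretive A I \<longleftrightarrow> (\<forall>x. 0 \<le> Re (quad_form A I x))"

definition strictly_accretive :: "(nat \<Rightarrow> nat \<Rightarrow> complex) \<Rightarrow> nat set \<Rightarrow> bool" where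
  "strictly_accretive A I \<longleftrightarrow> (\<forall>x. (\<exists>i\<in>I. x i \<noteq> 0) \<longrightarrow> 0 < Re (quad_form A I x))"

lemma hermitianD:
  assumes "hermitian A I" and "i \<in> I" and "j \<in> I"
  shows "A j i = cnj (A i j)"
  using assms unfolding hermitian_def by blast

lemma hermitian_diag_real:
  assumes "hermitian A I" and "k \<in> I"
  shows "of_real (Re (A k k)) = A k k"
proof -
  have "cnj (A k k) = A k k" using hermitianD[OF assms assms(2)] by simp
  then show ?thesis by (simp add: Reals_cnj_iff of_real_Re)
qed

lemma quad_form_cong:
  assumes "\<And>i j. i \<in> I \<Longrightarrow> j \<in> I \<Longrightarrow> A i j = B i j" and "\<And>i. i \<in> I \<Longrightarrow> x i = y i"
  shows "quad_form A I x = quad_form B I y"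
  unfolding quad_form_def using assms by (intro sum.cong refl) auto

lemma quad_form_add: "quad_form (\<lambda>i j. A i j + B i j) I x = quad_form A I x + quad_form B I x"
  unfolding quad_form_def by (simp add: sum.distrib algebra_simps)

lemma quad_form_scale: "quad_form (\<lambda>i j. c * A i j) I x = c * quad_form A I x"
  unfolding quad_form_def by (simp add: sum_distrib_left algebra_simps)

lemma quad_form_conj_transpose: "quad_form (\<lambda>i j. cnj (A j i)) I x = cnj (quad_form A I x)"
proof -
  have "cnj (quad_form A I x) = (\<Sum>i\<in>I. \<Sum>j\<in>I. cnj (x j) * cnj (A i j) * x i)"
    unfolding quad_form_def cnj_sum by (simp add: ac_simps)
  also have "\<dots> = quad_form (\<lambda>i j. cnj (A j i)) I x"
    unfolding quad_form_def by (rule sum.swap)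
  finally show ?thesis ..
qed

lemma hermitian_quad_form_real:
  assumes "hermitian A I"
  shows "Im (quad_form A I x) = 0"
proof -
  have "quad_form A I x = quad_form (\<lambda>i j. cnj (A j i)) I x"
  proof (intro quad_form_cong refl)
    fix i j assume "i \<in> I" "j \<in> I"
    then show "A i j = cnj (A j i)" using hermitianD[OF assms, of j i] by simp
  qed
  also have "\<dots> = cnj (quad_form A I x)"
    by (rule quad_form_conj_transpose)
  finally show ?thesis by (metis cnj.sel(2) neg_equal_zero)
qed

lemma cnj_mult_self: "cnj z * z = (of_real (cmod z))\<^sup>2"
  by (simp only: of_real_power[symmetric] complex_norm_square mult.commute)

lemma quad_form_one:
  assumes "finite I"
  shows "quad_form (\<lambda>i j. if i = j then 1 else 0) I x = of_real (sqnorm I x)"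
proof -
  have "(\<Sum>j\<in>I. cnj (x i) * (if i = j then 1 else 0) * x j) = of_real ((cmod (x i))\<^sup>2)"
    if "i \<in> I" for i
  proof -
    have "(\<Sum>j\<in>I. cnj (x i) * (if i = j then 1 else 0) * x j) = (\<Sum>j\<in>I. if i = j then cnj (x i) * x j else 0)"
      by (intro sum.cong) auto
    then show ?thesis using that assms by (simp add: cnj_mult_self)
  qed
  then show ?thesis unfolding quad_form_def sqnorm_def of_real_sum by simp
qed

lemma sqnorm_pos:
  assumes "finite I" and "i \<in> I" and "x i \<noteq> 0"
  shows "0 < sqnorm I x"
  unfolding sqnorm_def using assms by (intro sum_pos2[of I i]) auto

lemma strictly_accretive_diag_pos:
  assumes "strictly_accretive A I" and "k \<in> I" and "finite I"
  shows "0 < Re (A k k)"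
proof -
  define e :: "nat \<Rightarrow> complex" where "e i = (if i = k then 1 else 0)" for i
  have "quad_form A I e = (\<Sum>i\<in>I. if i = k then \<Sum>j\<in>I. if j = k then A k k else 0 else 0)"
    unfolding quad_form_def by (intro sum.cong refl) (auto simp: e_def intro!: sum.cong)
  also have "\<dots> = A k k" using assms(2,3) by simp
  moreover have "e k \<noteq> 0" by (simp add: e_def)
  ultimately show ?thesis using assms(1,2) unfolding strictly_accretive_def by fastforce
qed

lemma accretive_cong:
  assumes "\<And>i j. i \<in> I \<Longrightarrow> j \<in> I \<Longrightarrow> A i j = B i j"
  shows "accretive A I \<longleftrightarrow> accretive B I"
proof -
  have "quad_form A I x = quad_form B I x" for x
    using assms by (intro quad_form_cong) auto
  then show ?thesis unfolding accretive_def by simp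
qed

lemma strictly_accretive_cong:
  assumes "\<And>i j. i \<in> I \<Longrightarrow> j \<in> I \<Longrightarrow> A i j = B i j"
  shows "strictly_accretive A I \<longleftrightarrow> strictly_accretive B I"
proof -
  have "quad_form A I x = quad_form B I x" for x
    using assms by (intro quad_form_cong) auto
  then show ?thesis unfolding strictly_accretive_def by simp
qed

section \<open>Schur complements and triangular factorizations\<close>

definition schur_compl :: "(nat \<Rightarrow> nat \<Rightarrow> complex) \<Rightarrow> nat \<Rightarrow> nat \<Rightarrow> nat \<Rightarrow> complex" where
  "schur_compl A k i j = A i j - A i k * A k j / A k k"

lemma quad_form_insert:
  assumes "finite I" and "k \<notin> I"
  shows "quad_form A (insert k I) x = cnj (x k) * A k k * x k + cnj (x k) * (\<Sum>j\<in>I. A k j * x j)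
     + (\<Sum>i\<in>I. cnj (x i) * A i k) * x k + quad_form A I x"
  using assms by (simp add: quad_form_def sum.distrib sum_distrib_left sum_distrib_right algebra_simps)

lemma quad_form_insert_schur_compl:
  assumes "finite I" and "k \<notin> I" and "A k k \<noteq> 0"
  shows "quad_form A (insert k I) x = quad_form (schur_compl A k) I x
    + (cnj (x k) * A k k + (\<Sum>i\<in>I. cnj (x i) * A i k)) * (A k k * x k + (\<Sum>j\<in>I. A k j * x j)) / A k k"
proof -
  define a s r where "a = A k k" and "s = (\<Sum>j\<in>I. A k j * x j)" and "r = (\<Sum>i\<in>I. cnj (x i) * A i k)"
  have "quad_form A I x - quad_form (schur_compl A k) I x
      = (\<Sum>i\<in>I. \<Sum>j\<in>I. cnj (x i) * A i k * (A k j * x j) / A k k)"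
    unfolding quad_form_def schur_compl_def sum_subtractf[symmetric] by (simp add: algebra_simps)
  also have "\<dots> = r * s / a"
    unfolding r_def s_def a_def by (simp add: sum_product sum_divide_distrib)
  finally have "quad_form A I x = quad_form (schur_compl A k) I x + r * s / a"
    by (simp add: algebra_simps)
  moreover have "(cnj (x k) * a + r) * (a * x k + s) / a = cnj (x k) * a * x k + cnj (x k) * s + r * x k + r * s / a"
    using assms(3) unfolding a_def by (simp add: field_simps)
  ultimately show ?thesis
    unfolding quad_form_insert[OF assms(1,2)] a_def s_def r_def by simp
qed

lemma strictly_accretive_schur_compl:
  assumes "strictly_accretive A (insert k I)" and "finite I" and "k \<notin> I"
  shows "strictly_accretive (schur_compl A k) I"
  unfolding strictly_accretive_def
proof (intro allI impI)
  fix x :: "nat \<Rightarrow> complex" assume nonzero: "\<exists>i\<in>I. x i \<noteq> 0"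
  have a: "A k k \<noteq> 0"
    using strictly_accretive_diag_pos[OF assms(1)] assms(2) by fastforce
  define s where "s = (\<Sum>j\<in>I. A k j * x j)"
  \<comment> \<open>choosing \<open>x k\<close> so that the completed square vanishes\<close>
  define y where "y = x(k := - s / A k k)"
  have on_I: "y i = x i" if "i \<in> I" for i
    using that assms(3) by (auto simp: y_def)
  have "(\<Sum>j\<in>I. A k j * y j) = s" and "quad_form (schur_compl A k) I y = quad_form (schur_compl A k) I x"
    using on_I by (auto simp: s_def intro!: sum.cong quad_form_cong)
  then have "quad_form A (insert k I) y = quad_form (schur_compl A k) I x"
    unfolding quad_form_insert_schur_compl[OF assms(2,3), of A y, OF a] using a by (simp add: y_def)
  moreover have "\<exists>i\<in>insert k I. y i \<noteq> 0"
    using nonzero on_I by auto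
  ultimately show "0 < Re (quad_form (schur_compl A k) I x)"
    using assms(1) unfolding strictly_accretive_def by metis
qed

lemma hermitian_schur_compl:
  assumes "hermitian A (insert k I)"
  shows "hermitian (schur_compl A k) I"
  unfolding hermitian_def
proof (intro ballI)
  fix i j assume "i \<in> I" "j \<in> I"
  with assms have "cnj (A i j) = A j i" "cnj (A i k) = A k i" "cnj (A k j) = A j k" "cnj (A k k) = A k k"
    unfolding hermitian_def by (metis complex_cnj_cnj insertCI)+
  then show "schur_compl A k j i = cnj (schur_compl A k i j)"
    unfolding schur_compl_def by (simp add: mult.commute)
qed

lemma accretive_insert_schur_compl:
  assumes "hermitian A (insert k I)" and "finite I" and "k \<notin> I"
    and "0 < Re (A k k)" and "accretive (schur_compl A k) I"
  shows "accretive A (insert k I)"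
  unfolding accretive_def
proof
  fix x :: "nat \<Rightarrow> complex"
  define w where "w = A k k * x k + (\<Sum>j\<in>I. A k j * x j)"
  have nz: "A k k \<noteq> 0" using assms(4) by auto
  have akk: "of_real (Re (A k k)) = A k k"
    using hermitian_diag_real[OF assms(1) insertI1] .
  have "(\<Sum>i\<in>I. cnj (x i) * A i k) = (\<Sum>j\<in>I. cnj (A k j * x j))"
    using hermitianD[OF assms(1) insertI1] by (intro sum.cong refl) simp
  moreover have "cnj (A k k) = A k k" by (metis akk complex_cnj_complex_of_real)
  ultimately have cw: "cnj (x k) * A k k + (\<Sum>i\<in>I. cnj (x i) * A i k) = cnj w"
    unfolding w_def by (simp add: cnj_sum mult.commute)
  have "quad_form A (insert k I) x = quad_form (schur_compl A k) I x + cnj w * w / A k k"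
    using quad_form_insert_schur_compl[OF assms(2,3), of A x, OF nz] unfolding cw by (simp add: w_def)
  also have "cnj w * w / A k k = of_real ((cmod w)\<^sup>2 / Re (A k k))"
  proof -
    have "cnj w * w = of_real ((cmod w)\<^sup>2)" by (simp only: complex_norm_square mult.commute)
    then show ?thesis by (metis akk of_real_divide)
  qed
  finally show "0 \<le> Re (quad_form A (insert k I) x)"
    using assms(4,5) unfolding accretive_def by simp
qed

lemma accretive_insert_zero_row:
  assumes "hermitian A (insert k I)" and "finite I" and "k \<notin> I"
    and "\<And>j. j \<in> insert k I \<Longrightarrow> A k j = 0" and "accretive A I"
  shows "accretive A (insert k I)"
proof -
  have "A i k = 0" if "i \<in> insert k I" for i
    using hermitianD[OF assms(1) insertI1 that] assms(4)[OF that] by simp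
  then have "quad_form A (insert k I) x = quad_form A I x" for x
    unfolding quad_form_insert[OF assms(2,3)] using assms(4) by simp
  then show ?thesis using assms(5) unfolding accretive_def by simp
qed

lemma Re_mult_nonneg_if_real:
  fixes a t :: complex
  assumes "0 < Re a" and "0 \<le> Re t" and "Im (a * t) = 0"
  shows "0 \<le> Re (a * t)" and "Re (a * t) = 0 \<Longrightarrow> t = 0"
proof -
  have a: "a \<noteq> 0" using assms(1) by auto
  have at: "a * t = of_real (Re (a * t))" using assms(3) by (simp add: complex_eq_iff)
  have "Re t = Re (of_real (Re (a * t)) / a)"
    using a at by (metis nonzero_mult_div_cancel_left)
  also have "\<dots> = Re (a * t) * Re a / (cmod a)\<^sup>2"
    by (simp add: Re_divide')
  finally have "Re (a * t) * Re a = Re t * (cmod a)\<^sup>2"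
    using a by (simp add: field_simps)
  then have "0 \<le> Re (a * t) * Re a" using assms(2) by simp
  then show "0 \<le> Re (a * t)" using assms(1) by (simp add: zero_le_mult_iff)
  show "t = 0" if "Re (a * t) = 0"
    using that at a by simp
qed

lemma hermitian_product_pivot:
  assumes "hermitian P I" and "k \<in> I" and "0 < Re (N k k)" and "0 \<le> Re t"
    and col: "\<And>i. i \<in> I \<Longrightarrow> P i k = N i k * t"
  shows "0 < Re (P k k) \<or> (\<forall>j\<in>I. P k j = 0)"
proof (cases "t = 0")
  case True
  have "P k j = 0" if "j \<in> I" for j
    using hermitianD[OF assms(1) that assms(2)] col[OF that] True by simp
  then show ?thesis by blast
next
  case False
  have "Im (N k k * t) = 0"
    using hermitian_diag_real[OF assms(1,2)] col[OF assms(2)] by (metis Im_complex_of_real)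
  then have "0 \<le> Re (N k k * t)" and "Re (N k k * t) \<noteq> 0"
    using Re_mult_nonneg_if_real[OF assms(3,4)] False by auto
  then show ?thesis using col[OF assms(2)] by simp
qed

lemma schur_compl_factor:
  assumes "finite J" and "k \<notin> J" and "N k k \<noteq> 0" and "i \<in> J"
    and factor: "\<And>i. i \<in> insert k J \<Longrightarrow> P i j = (\<Sum>l\<in>insert k J. N i l * T l j)"
  shows "P i j - N i k * P k j / N k k = (\<Sum>l\<in>J. schur_compl N k i l * T l j)"
proof -
  have "P i j - N i k * P k j / N k k
      = (\<Sum>l\<in>J. N i l * T l j) - N i k / N k k * (\<Sum>l\<in>J. N k l * T l j)"
    using factor[of i] factor[of k] assms(1-4) by (simp add: field_simps)
  also have "\<dots> = (\<Sum>l\<in>J. schur_compl N k i l * T l j)"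
    unfolding schur_compl_def by (simp add: sum_distrib_left sum_subtractf[symmetric] algebra_simps)
  finally show ?thesis .
qed

lemma schur_compl_triangular_factor:
  assumes "finite J" and "k \<notin> J" and "hermitian P (insert k J)" and "N k k \<noteq> 0"
    and col: "\<And>i. i \<in> insert k J \<Longrightarrow> P i k = N i k * T k k"
    and factor: "\<And>i j. i \<in> insert k J \<Longrightarrow> j \<in> insert k J \<Longrightarrow> P i j = (\<Sum>l\<in>insert k J. N i l * T l j)"
    and "i \<in> J" and "j \<in> J"
  shows "schur_compl P k i j = (\<Sum>l\<in>J. schur_compl N k i l * T l j)"
proof -
  \<comment> \<open>if \<open>T k k = 0\<close> then row k of P vanishes; otherwise \<open>T k k\<close> cancels in the pivot\<close>
  have "schur_compl P k i j = P i j - N i k * P k j / N k k"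
  proof (cases "T k k = 0")
    case True
    then have "P k j = 0" using hermitianD[OF assms(3), of j k] col assms(8) by simp
    then show ?thesis unfolding schur_compl_def by simp
  next
    case False
    then show ?thesis using col assms(4,7) unfolding schur_compl_def by simp
  qed
  also have "\<dots> = (\<Sum>l\<in>J. schur_compl N k i l * T l j)"
    by (rule schur_compl_factor[of J k N i P j T, OF assms(1,2,4,7)]) (use factor assms(8) in auto)
  finally show ?thesis .
qed

lemma accretive_triangular_factor:
  assumes "finite I" and "hermitian P I" and "strictly_accretive N I"
    and "\<And>i j. i \<in> I \<Longrightarrow> j \<in> I \<Longrightarrow> P i j = (\<Sum>l\<in>I. N i l * T l j)"
    and "\<And>i j. i \<in> I \<Longrightarrow> j \<in> I \<Longrightarrow> j < i \<Longrightarrow> T i j = 0"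
    and "\<And>i. i \<in> I \<Longrightarrow> 0 \<le> Re (T i i)"
  shows "accretive P I"
  using assms
proof (induction I arbitrary: P N rule: finite_linorder_min_induct)
  case empty
  then show ?case by (simp add: accretive_def quad_form_def)
next
  case (insert k J)
  have fin: "finite J" and k: "k \<notin> J" and less: "\<And>l. l \<in> J \<Longrightarrow> k < l"
    using insert.hyps by auto
  note herm = insert.prems(1) and pos = insert.prems(2) and factor = insert.prems(3)
    and upper = insert.prems(4) and diag = insert.prems(5)
  have Re_N: "0 < Re (N k k)"
    using strictly_accretive_diag_pos[OF pos] fin by simp
  then have nz: "N k k \<noteq> 0" by auto
  have col: "P i k = N i k * T k k" if "i \<in> insert k J" for i
  proof -
    have "(\<Sum>l\<in>J. N i l * T l k) = 0" using upper less by (intro sum.neutral) auto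
    then show ?thesis using factor[OF that] fin k by simp
  qed
  have IH: "accretive (schur_compl P k) J"
  proof (rule insert.IH)
    show "hermitian (schur_compl P k) J" using hermitian_schur_compl[OF herm] .
    show "strictly_accretive (schur_compl N k) J" using strictly_accretive_schur_compl[OF pos fin k] .
    show "schur_compl P k i j = (\<Sum>l\<in>J. schur_compl N k i l * T l j)" if "i \<in> J" "j \<in> J" for i j
      using schur_compl_triangular_factor[OF fin k herm nz col factor that] .
  qed (use upper diag in auto)
  from hermitian_product_pivot[of P "insert k J" k N "T k k", OF herm insertI1 Re_N diag[OF insertI1] col]
  show ?case
  proof
    assume "0 < Re (P k k)"
    then show ?case by (intro accretive_insert_schur_compl[OF herm fin k _ IH])
  next
    assume row: "\<forall>j\<in>insert k J. P k j = 0"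
    then have "schur_compl P k i j = P i j" if "i \<in> J" "j \<in> J" for i j
      using that unfolding schur_compl_def by simp
    then have "accretive P J" using IH accretive_cong by blast
    with row show ?case by (intro accretive_insert_zero_row[OF herm fin k]) auto
  qed
qed

abbreviation entries :: "'a mat \<Rightarrow> nat \<Rightarrow> nat \<Rightarrow> 'a" where
  "entries A \<equiv> \<lambda>i j. A $$ (i, j)"

lemma nonzero_vec_index:
  assumes "v \<in> carrier_vec n" and "v \<noteq> 0\<^sub>v n"
  obtains i where "i < n" and "v $ i \<noteq> 0"
proof -
  have "v = 0\<^sub>v n" if "\<forall>i<n. v $ i = 0"
    using assms(1) that by (intro eq_vecI) auto
  then show ?thesis using assms(2) that by blast
qed

lemma sqnorm_vec_pos:
  assumes "v \<in> carrier_vec n" and "v \<noteq> 0\<^sub>v n"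
  shows "0 < sqnorm {0..<n} (($) v)"
  using assms by (elim nonzero_vec_index) (auto intro: sqnorm_pos)

lemma quad_form_mult_mat_vec:
  assumes "A \<in> carrier_mat n n" and "v \<in> carrier_vec n"
  shows "quad_form (entries A) {0..<n} (($) v) = (\<Sum>i\<in>{0..<n}. cnj (v $ i) * (A *\<^sub>v v) $ i)"
  unfolding quad_form_def using assms
  by (intro sum.cong refl) (simp add: scalar_prod_def sum_distrib_left mult.assoc)

lemma quad_form_eigenvector:
  assumes "A \<in> carrier_mat n n" and "v \<in> carrier_vec n" and "A *\<^sub>v v = k \<cdot>\<^sub>v v"
  shows "quad_form (entries A) {0..<n} (($) v) = k * of_real (sqnorm {0..<n} (($) v))"
  unfolding quad_form_mult_mat_vec[OF assms(1,2)] assms(3) sqnorm_def of_real_sum sum_distrib_left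
  using assms(2) by (intro sum.cong refl) (simp add: cnj_mult_self[symmetric] ac_simps)

lemma accretive_eigenvalue_Re_nonneg:
  assumes "A \<in> carrier_mat n n" and "accretive (entries A) {0..<n}" and "eigenvalue A k"
  shows "0 \<le> Re k"
proof -
  obtain v where v: "v \<in> carrier_vec n" "v \<noteq> 0\<^sub>v n" "A *\<^sub>v v = k \<cdot>\<^sub>v v"
    using assms(1,3) unfolding eigenvalue_def eigenvector_def by auto
  have "0 \<le> Re (quad_form (entries A) {0..<n} (($) v))"
    using assms(2) unfolding accretive_def by blast
  then have "0 \<le> Re k * sqnorm {0..<n} (($) v)"
    unfolding quad_form_eigenvector[OF assms(1) v(1,3)] by simp
  then show ?thesis using sqnorm_vec_pos[OF v(1,2)] by (simp add: zero_le_mult_iff)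
qed

lemma hermitian_eigenvalue_real:
  assumes "A \<in> carrier_mat n n" and "hermitian (entries A) {0..<n}" and "eigenvalue A k"
  shows "Im k = 0"
proof -
  obtain v where v: "v \<in> carrier_vec n" "v \<noteq> 0\<^sub>v n" "A *\<^sub>v v = k \<cdot>\<^sub>v v"
    using assms(1,3) unfolding eigenvalue_def eigenvector_def by auto
  have "Im k * sqnorm {0..<n} (($) v) = 0"
    using hermitian_quad_form_real[OF assms(2), of "($) v"]
    unfolding quad_form_eigenvector[OF assms(1) v(1,3)] by simp
  then show ?thesis using sqnorm_vec_pos[OF v(1,2)] by simp
qed

lemma strictly_accretive_det_nonzero:
  assumes "A \<in> carrier_mat n n" and "strictly_accretive (entries A) {0..<n}"
  shows "det A \<noteq> 0"
proof
  assume "det A = 0"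
  then obtain v where v: "v \<in> carrier_vec n" "v \<noteq> 0\<^sub>v n" "A *\<^sub>v v = 0\<^sub>v n"
    using det_0_iff_vec_prod_zero[OF assms(1)] by auto
  then have "A *\<^sub>v v = 0 \<cdot>\<^sub>v v" by auto
  then have "quad_form (entries A) {0..<n} (($) v) = 0"
    using quad_form_eigenvector[OF assms(1) v(1)] by simp
  moreover obtain i where "i < n" "v $ i \<noteq> 0" using nonzero_vec_index[OF v(1,2)] .
  ultimately show False using assms(2) unfolding strictly_accretive_def by force
qed

lemma eigenvalue_map_of_real_iff:
  fixes B :: "real mat"
  assumes "B \<in> carrier_mat n n"
  shows "eigenvalue (map_mat complex_of_real B) (of_real k) \<longleftrightarrow> eigenvalue B k"
  using assms by (simp add: eigenvalue_root_char_poly[of _ n] of_real_hom.char_poly_hom)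

section \<open>Congruence and the inertia argument\<close>

lemma quad_form_congruence:
  "quad_form (\<lambda>i j. \<Sum>k\<in>I. \<Sum>l\<in>I. cnj (S k i) * A k l * S l j) I y
     = quad_form A I (\<lambda>k. \<Sum>i\<in>I. S k i * y i)"
proof -
  have "quad_form (\<lambda>i j. \<Sum>k\<in>I. \<Sum>l\<in>I. cnj (S k i) * A k l * S l j) I y
     = (\<Sum>i\<in>I. \<Sum>j\<in>I. \<Sum>k\<in>I. \<Sum>l\<in>I. cnj (y i) * cnj (S k i) * A k l * S l j * y j)"
    unfolding quad_form_def by (simp add: sum_distrib_left sum_distrib_right mult.assoc)
  also have "\<dots> = (\<Sum>i\<in>I. \<Sum>k\<in>I. \<Sum>j\<in>I. \<Sum>l\<in>I. cnj (y i) * cnj (S k i) * A k l * S l j * y j)"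
    by (intro sum.cong refl sum.swap)
  also have "\<dots> = (\<Sum>i\<in>I. \<Sum>k\<in>I. \<Sum>l\<in>I. \<Sum>j\<in>I. cnj (y i) * cnj (S k i) * A k l * S l j * y j)"
    by (intro sum.cong refl sum.swap)
  also have "\<dots> = (\<Sum>k\<in>I. \<Sum>i\<in>I. \<Sum>l\<in>I. \<Sum>j\<in>I. cnj (y i) * cnj (S k i) * A k l * S l j * y j)"
    by (rule sum.swap)
  also have "\<dots> = (\<Sum>k\<in>I. \<Sum>l\<in>I. \<Sum>i\<in>I. \<Sum>j\<in>I. cnj (y i) * cnj (S k i) * A k l * S l j * y j)"
    by (intro sum.cong refl sum.swap)
  also have "\<dots> = (\<Sum>k\<in>I. \<Sum>l\<in>I. \<Sum>j\<in>I. \<Sum>i\<in>I. cnj (y i) * cnj (S k i) * A k l * S l j * y j)"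
    by (intro sum.cong refl sum.swap)
  also have "\<dots> = quad_form A I (\<lambda>k. \<Sum>i\<in>I. S k i * y i)"
    unfolding quad_form_def
    by (simp add: sum_distrib_left sum_distrib_right cnj_sum mult.assoc mult.left_commute)
  finally show ?thesis .
qed

lemma hermitian_congruence:
  assumes "hermitian A I"
  shows "hermitian (\<lambda>i j. \<Sum>k\<in>I. \<Sum>l\<in>I. cnj (S k i) * A k l * S l j) I"
  unfolding hermitian_def
proof (intro ballI)
  fix i j assume "i \<in> I" "j \<in> I"
  have "cnj (\<Sum>k\<in>I. \<Sum>l\<in>I. cnj (S k i) * A k l * S l j)
      = (\<Sum>k\<in>I. \<Sum>l\<in>I. cnj (S l j) * A l k * S k i)"
    unfolding cnj_sum
  proof (intro sum.cong refl)
    fix k l assume "k \<in> I" "l \<in> I"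
    then have "cnj (A k l) = A l k" using hermitianD[OF assms, of k l] by simp
    then show "cnj (cnj (S k i) * A k l * S l j) = cnj (S l j) * A l k * S k i" by simp
  qed
  also have "\<dots> = (\<Sum>l\<in>I. \<Sum>k\<in>I. cnj (S l j) * A l k * S k i)"
    by (rule sum.swap)
  finally show "(\<Sum>k\<in>I. \<Sum>l\<in>I. cnj (S k j) * A k l * S l i)
      = cnj (\<Sum>k\<in>I. \<Sum>l\<in>I. cnj (S k i) * A k l * S l j)"
    by simp
qed

lemma adjoint_carrier_mat:
  "S \<in> carrier_mat n n \<Longrightarrow> mat_adjoint S \<in> carrier_mat n n"
  by (simp add: mat_adjoint_def mat_of_rows_def)

lemma index_mult_mat_sum:
  assumes "A \<in> carrier_mat n n" and "B \<in> carrier_mat n n" and "i < n" and "j < n"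
  shows "(A * B) $$ (i, j) = (\<Sum>l\<in>{0..<n}. A $$ (i, l) * B $$ (l, j))"
  using assms by (simp add: scalar_prod_def)

lemma index_adjoint_congruence:
  fixes A S :: "complex mat"
  assumes "A \<in> carrier_mat n n" and "S \<in> carrier_mat n n" and "i < n" and "j < n"
  shows "(mat_adjoint S * A * S) $$ (i, j)
    = (\<Sum>k\<in>{0..<n}. \<Sum>l\<in>{0..<n}. cnj (S $$ (k, i)) * A $$ (k, l) * S $$ (l, j))"
proof -
  have SH: "mat_adjoint S \<in> carrier_mat n n" using adjoint_carrier_mat[OF assms(2)] .
  have SH_index: "mat_adjoint S $$ (i, k) = cnj (S $$ (k, i))" if "k < n" for k
    using assms(2,3) that by (simp add: mat_adjoint_def mat_of_rows_def)
  have inner: "(mat_adjoint S * A) $$ (i, l) = (\<Sum>k\<in>{0..<n}. cnj (S $$ (k, i)) * A $$ (k, l))"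
    if "l < n" for l
    unfolding index_mult_mat_sum[OF SH assms(1) assms(3) that]
    by (intro sum.cong refl) (simp add: SH_index)
  have "(mat_adjoint S * A * S) $$ (i, j) = (\<Sum>l\<in>{0..<n}. (mat_adjoint S * A) $$ (i, l) * S $$ (l, j))"
    using SH assms by (intro index_mult_mat_sum) auto
  also have "\<dots> = (\<Sum>l\<in>{0..<n}. \<Sum>k\<in>{0..<n}. cnj (S $$ (k, i)) * A $$ (k, l) * S $$ (l, j))"
    by (intro sum.cong refl) (simp add: inner sum_distrib_right)
  also have "\<dots> = (\<Sum>k\<in>{0..<n}. \<Sum>l\<in>{0..<n}. cnj (S $$ (k, i)) * A $$ (k, l) * S $$ (l, j))"
    by (rule sum.swap)
  finally show ?thesis .
qed

lemma quad_form_adjoint_congruence: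
  fixes A S :: "complex mat"
  assumes "A \<in> carrier_mat n n" and "S \<in> carrier_mat n n"
  shows "quad_form (entries (mat_adjoint S * A * S)) {0..<n} y
    = quad_form (entries A) {0..<n} (($) (S *\<^sub>v vec n y))"
proof -
  have "quad_form (entries (mat_adjoint S * A * S)) {0..<n} y
      = quad_form (\<lambda>i j. \<Sum>k\<in>{0..<n}. \<Sum>l\<in>{0..<n}. cnj (S $$ (k, i)) * A $$ (k, l) * S $$ (l, j)) {0..<n} y"
    using index_adjoint_congruence[OF assms] by (intro quad_form_cong) auto
  also have "\<dots> = quad_form (entries A) {0..<n} (\<lambda>k. \<Sum>i\<in>{0..<n}. S $$ (k, i) * y i)"
    by (rule quad_form_congruence)
  also have "\<dots> = quad_form (entries A) {0..<n} (($) (S *\<^sub>v vec n y))"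
    using assms(2) by (intro quad_form_cong) (auto simp: scalar_prod_def)
  finally show ?thesis .
qed

lemma hermitian_adjoint_congruence:
  fixes A S :: "complex mat"
  assumes "A \<in> carrier_mat n n" and "S \<in> carrier_mat n n" and "hermitian (entries A) {0..<n}"
  shows "hermitian (entries (mat_adjoint S * A * S)) {0..<n}"
  using hermitian_congruence[OF assms(3), of "entries S"] index_adjoint_congruence[OF assms(1,2)]
  unfolding hermitian_def by simp

lemma strictly_accretive_adjoint_congruence:
  fixes A S S' :: "complex mat"
  assumes "A \<in> carrier_mat n n" and "S \<in> carrier_mat n n" and "S' \<in> carrier_mat n n"
    and "S' * S = 1\<^sub>m n" and "strictly_accretive (entries A) {0..<n}"
  shows "strictly_accretive (entries (mat_adjoint S * A * S)) {0..<n}"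
  unfolding strictly_accretive_def quad_form_adjoint_congruence[OF assms(1,2)]
proof (intro allI impI)
  fix y :: "nat \<Rightarrow> complex" assume "\<exists>i\<in>{0..<n}. y i \<noteq> 0"
  then have "vec n y \<noteq> 0\<^sub>v n" by (metis atLeastLessThan_iff index_vec index_zero_vec(1))
  moreover have "S' *\<^sub>v (S *\<^sub>v vec n y) = vec n y"
    using assms(2-4) by (simp add: assoc_mult_mat_vec[symmetric, of _ n n _ n])
  moreover have "S' *\<^sub>v 0\<^sub>v n = 0\<^sub>v n" using assms(3) by (intro eq_vecI) auto
  ultimately have "S *\<^sub>v vec n y \<noteq> 0\<^sub>v n" by metis
  then have "\<exists>k\<in>{0..<n}. (S *\<^sub>v vec n y) $ k \<noteq> 0"
    using nonzero_vec_index[OF mult_mat_vec_carrier[OF assms(2) vec_carrier]] by (metis atLeastLessThan_iff zero_le)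
  then show "0 < Re (quad_form (entries A) {0..<n} (($) (S *\<^sub>v vec n y)))"
    using assms(5) unfolding strictly_accretive_def by blast
qed

lemma accretive_of_adjoint_congruence:
  fixes A S S' :: "complex mat"
  assumes "A \<in> carrier_mat n n" and "S \<in> carrier_mat n n" and "S' \<in> carrier_mat n n"
    and "S * S' = 1\<^sub>m n" and "accretive (entries (mat_adjoint S * A * S)) {0..<n}"
  shows "accretive (entries A) {0..<n}"
  unfolding accretive_def
proof
  fix x :: "nat \<Rightarrow> complex"
  define y where "y k = (S' *\<^sub>v vec n x) $ k" for k
  have "vec n y = S' *\<^sub>v vec n x" using assms(3) by (auto simp: y_def)
  then have "S *\<^sub>v vec n y = vec n x"
    using assms(2-4) by (simp add: assoc_mult_mat_vec[symmetric, of _ n n _ n])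
  then have "quad_form (entries A) {0..<n} x = quad_form (entries (mat_adjoint S * A * S)) {0..<n} y"
    unfolding quad_form_adjoint_congruence[OF assms(1,2)] by (intro quad_form_cong) auto
  then show "0 \<le> Re (quad_form (entries A) {0..<n} x)"
    using assms(5) unfolding accretive_def by simp
qed

lemma schur_triangularization:
  fixes T :: "complex mat"
  assumes T: "T \<in> carrier_mat n n"
  obtains S S' U where "S \<in> carrier_mat n n" and "S' \<in> carrier_mat n n" and "U \<in> carrier_mat n n"
    and "S * S' = 1\<^sub>m n" and "S' * S = 1\<^sub>m n" and "T = S * U * S'"
    and "upper_triangular U" and "\<And>i. i < n \<Longrightarrow> eigenvalue T (U $$ (i, i))"
proof -
  obtain es where char_poly: "char_poly T = (\<Prod>a\<leftarrow>es. [:- a, 1:])"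
    using char_poly_factorized[OF T] by auto
  obtain U S S' where decomp: "schur_decomposition T es = (U, S, S')"
    by (cases "schur_decomposition T es") auto
  have sim: "similar_mat_wit T U S S'" and upper: "upper_triangular U" and diag: "diag_mat U = es"
    using schur_decomposition[OF T char_poly decomp] by auto
  have carriers: "S \<in> carrier_mat n n" "S' \<in> carrier_mat n n" "U \<in> carrier_mat n n"
    and inverse: "S * S' = 1\<^sub>m n" "S' * S = 1\<^sub>m n" and TU: "T = S * U * S'"
    using sim T unfolding similar_mat_wit_def Let_def by auto
  have "eigenvalue T (U $$ (i, i))" if "i < n" for i
  proof -
    have "U $$ (i, i) \<in> set es"
      using diag that carriers(3) by (auto simp: diag_mat_def)
    then show ?thesis
      unfolding eigenvalue_root_char_poly[OF T] char_poly by (metis linear_poly_root)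
  qed
  with carriers inverse TU upper show ?thesis using that by blast
qed

lemma hermitian_product_accretive:
  fixes P N T :: "complex mat"
  assumes T: "T \<in> carrier_mat n n" and N: "N \<in> carrier_mat n n" and PNT: "P = N * T"
    and herm: "hermitian (entries P) {0..<n}" and pos: "strictly_accretive (entries N) {0..<n}"
    and spectrum: "\<And>k. eigenvalue T k \<Longrightarrow> 0 \<le> Re k"
  shows "accretive (entries P) {0..<n}"
proof -
  obtain S S' U where S: "S \<in> carrier_mat n n" and S': "S' \<in> carrier_mat n n"
    and U: "U \<in> carrier_mat n n" and inverse: "S * S' = 1\<^sub>m n" "S' * S = 1\<^sub>m n"
    and TU: "T = S * U * S'" and upper: "upper_triangular U"
    and diag: "\<And>i. i < n \<Longrightarrow> eigenvalue T (U $$ (i, i))"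
    using schur_triangularization[OF T] by metis
  have P: "P \<in> carrier_mat n n" using PNT N T by simp
  define N' where "N' = mat_adjoint S * N * S"
  have N': "N' \<in> carrier_mat n n" using adjoint_carrier_mat[OF S] N S by (simp add: N'_def)
  have PSU: "mat_adjoint S * P * S = N' * U"
    unfolding PNT TU N'_def using adjoint_carrier_mat[OF S] N S U S' inverse
    by (simp add: assoc_mult_mat[of _ n n _ n _ n])
  have "accretive (entries (N' * U)) {0..<n}"
  proof (rule accretive_triangular_factor[of _ _ "entries N'" "entries U"])
    show "hermitian (entries (N' * U)) {0..<n}"
      using hermitian_adjoint_congruence[OF P S herm] unfolding PSU .
    show "strictly_accretive (entries N') {0..<n}"
      unfolding N'_def using strictly_accretive_adjoint_congruence[OF N S S' inverse(2) pos] .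
    show "(N' * U) $$ (i, j) = (\<Sum>l\<in>{0..<n}. N' $$ (i, l) * U $$ (l, j))"
      if "i \<in> {0..<n}" "j \<in> {0..<n}" for i j
      using that by (intro index_mult_mat_sum[OF N' U]) auto
  qed (use U upper diag spectrum in \<open>auto simp: upper_triangular_def\<close>)
  then show ?thesis using accretive_of_adjoint_congruence[OF P S S' inverse(1)] unfolding PSU by blast
qed

section \<open>Hermitian forms, the spectral radius and block triangular parts\<close>

lemma smult_mat_mult_mat_vec:
  assumes "A \<in> carrier_mat n n" and "v \<in> carrier_vec n"
  shows "(a \<cdot>\<^sub>m A) *\<^sub>v v = a \<cdot>\<^sub>v (A *\<^sub>v v)"
  using assms by (intro eq_vecI) (auto simp: scalar_prod_def sum_distrib_left ac_simps)

lemma strictly_accretive_one_mat: "strictly_accretive (entries (1\<^sub>m n)) {0..<n}"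
  unfolding strictly_accretive_def
proof (intro allI impI)
  fix y :: "nat \<Rightarrow> complex" assume "\<exists>i\<in>{0..<n}. y i \<noteq> 0"
  then have "0 < sqnorm {0..<n} y" by (auto intro: sqnorm_pos)
  moreover have "quad_form (entries (1\<^sub>m n)) {0..<n} y = of_real (sqnorm {0..<n} y)"
    by (subst quad_form_one[symmetric]) (auto intro!: quad_form_cong)
  ultimately show "0 < Re (quad_form (entries (1\<^sub>m n)) {0..<n} y)" by simp
qed

lemma eigenvalue_spectral_shift_Re_nonneg:
  fixes A :: "complex mat" and c :: complex
  assumes A: "A \<in> carrier_mat n n" and c: "c = 1 \<or> c = -1"
    and "eigenvalue (of_real (spectral_radius A) \<cdot>\<^sub>m 1\<^sub>m n + c \<cdot>\<^sub>m A) k"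
  shows "0 \<le> Re k"
proof -
  define \<rho> where "\<rho> = spectral_radius A"
  obtain v where v: "v \<in> carrier_vec n" "v \<noteq> 0\<^sub>v n"
    and eigen: "(of_real \<rho> \<cdot>\<^sub>m 1\<^sub>m n + c \<cdot>\<^sub>m A) *\<^sub>v v = k \<cdot>\<^sub>v v"
    using assms(3) A unfolding eigenvalue_def eigenvector_def \<rho>_def by auto
  have "(A *\<^sub>v v) $ i = (c * (k - of_real \<rho>)) * v $ i" if "i < n" for i
  proof -
    have "k * v $ i = of_real \<rho> * v $ i + c * (A *\<^sub>v v) $ i"
      using arg_cong[OF eigen, of "\<lambda>w. w $ i"] A v(1) that
      by (simp add: add_mult_distrib_mat_vec[of _ n n] smult_mat_mult_mat_vec[of _ n])
    then have "c * (k * v $ i) = c * of_real \<rho> * v $ i + (c * c) * (A *\<^sub>v v) $ i"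
      by (simp add: algebra_simps)
    then show ?thesis using c by (auto simp: algebra_simps)
  qed
  then have "A *\<^sub>v v = (c * (k - of_real \<rho>)) \<cdot>\<^sub>v v"
    using A v(1) by (intro eq_vecI) auto
  then have "eigenvalue A (c * (k - of_real \<rho>))"
    using A v unfolding eigenvalue_def eigenvector_def by auto
  then have "cmod (c * (k - of_real \<rho>)) \<le> \<rho>"
    unfolding \<rho>_def using A v(1,2)
    by (intro spectral_radius_mem_max(2)[OF A]) (auto simp: spectrum_def)
  then have "cmod (k - of_real \<rho>) \<le> \<rho>" using c by (auto simp: norm_mult)
  moreover have "\<rho> - Re k \<le> cmod (k - of_real \<rho>)"
    using abs_Re_le_cmod[of "k - of_real \<rho>"] by simp
  ultimately show ?thesis by simp
qed

lemma accretive_spectral_shift: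
  fixes A :: "complex mat" and c :: complex
  assumes A: "A \<in> carrier_mat n n" and herm: "hermitian (entries A) {0..<n}"
    and c: "c = 1 \<or> c = -1"
  shows "accretive (entries (of_real (spectral_radius A) \<cdot>\<^sub>m 1\<^sub>m n + c \<cdot>\<^sub>m A)) {0..<n}"
proof -
  let ?P = "of_real (spectral_radius A) \<cdot>\<^sub>m 1\<^sub>m n + c \<cdot>\<^sub>m A"
  have P: "?P \<in> carrier_mat n n" using A by simp
  show ?thesis
  proof (rule hermitian_product_accretive[OF P one_carrier_mat])
    show "?P = 1\<^sub>m n * ?P" by (rule left_mult_one_mat[OF P, symmetric])
    show "hermitian (entries ?P) {0..<n}"
      unfolding hermitian_def
    proof (intro ballI)
      fix i j assume "i \<in> {0..<n}" "j \<in> {0..<n}"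
      then show "?P $$ (j, i) = cnj (?P $$ (i, j))"
        using hermitianD[OF herm, of i j] A c by auto
    qed
    show "0 \<le> Re k" if "eigenvalue ?P k" for k
      using eigenvalue_spectral_shift_Re_nonneg[OF A c that] .
  qed (rule strictly_accretive_one_mat)
qed

lemma abs_Re_quad_form_le_spectral_radius:
  fixes A :: "complex mat"
  assumes A: "A \<in> carrier_mat n n" and herm: "hermitian (entries A) {0..<n}"
  shows "\<bar>Re (quad_form (entries A) {0..<n} x)\<bar> \<le> spectral_radius A * sqnorm {0..<n} x"
proof -
  define \<rho> where "\<rho> = spectral_radius A"
  have "0 \<le> \<rho> * sqnorm {0..<n} x + Re (c * quad_form (entries A) {0..<n} x)"
    if c: "c = 1 \<or> c = -1" for c :: complex
  proof -
    have "0 \<le> Re (quad_form (entries (of_real \<rho> \<cdot>\<^sub>m 1\<^sub>m n + c \<cdot>\<^sub>m A)) {0..<n} x)"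
      using accretive_spectral_shift[OF A herm c] unfolding accretive_def \<rho>_def by blast
    also have "quad_form (entries (of_real \<rho> \<cdot>\<^sub>m 1\<^sub>m n + c \<cdot>\<^sub>m A)) {0..<n} x
        = quad_form (\<lambda>i j. of_real \<rho> * (if i = j then 1 else 0) + c * A $$ (i, j)) {0..<n} x"
      using A by (intro quad_form_cong) auto
    also have "\<dots> = of_real \<rho> * of_real (sqnorm {0..<n} x) + c * quad_form (entries A) {0..<n} x"
      by (simp add: quad_form_add quad_form_scale quad_form_one)
    finally show ?thesis by simp
  qed
  from this[of 1] this[of "-1"] show ?thesis unfolding \<rho>_def by (simp add: abs_le_iff)
qed

definition block_lower_part :: "(nat \<Rightarrow> nat) \<Rightarrow> (nat \<Rightarrow> nat \<Rightarrow> complex) \<Rightarrow> nat \<Rightarrow> nat \<Rightarrow> complex" where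
  "block_lower_part b A i j = (if b j < b i then A i j else 0)"

lemma quad_form_block_diagonal:
  assumes "finite I"
  shows "quad_form (\<lambda>i j. if b i = b j then A i j else 0) I x
    = (\<Sum>s\<in>b ` I. quad_form A I (\<lambda>i. if b i = s then x i else 0))"
proof -
  have collapse: "(\<Sum>s\<in>b ` I. if b i = s \<and> b j = s then z else 0) = (if b i = b j then z else 0)"
    if "i \<in> I" for i j and z :: complex
  proof -
    have "(\<Sum>s\<in>b ` I. if b i = s \<and> b j = s then z else 0)
        = (\<Sum>s\<in>b ` I. if s = b i then (if b i = b j then z else 0) else 0)"
      by (intro sum.cong) auto
    then show ?thesis using that assms by simp
  qed
  have "(\<Sum>s\<in>b ` I. quad_form A I (\<lambda>i. if b i = s then x i else 0))
      = (\<Sum>s\<in>b ` I. \<Sum>i\<in>I. \<Sum>j\<in>I. if b i = s \<and> b j = s then cnj (x i) * A i j * x j else 0)"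
    unfolding quad_form_def by (intro sum.cong refl) auto
  also have "\<dots> = (\<Sum>i\<in>I. \<Sum>j\<in>I. \<Sum>s\<in>b ` I. if b i = s \<and> b j = s then cnj (x i) * A i j * x j else 0)"
    by (subst sum.swap) (intro sum.cong refl sum.swap)
  also have "\<dots> = quad_form (\<lambda>i j. if b i = b j then A i j else 0) I x"
    unfolding quad_form_def using collapse by (intro sum.cong refl) simp
  finally show ?thesis ..
qed

lemma sqnorm_blocks:
  assumes "finite I"
  shows "sqnorm I x = (\<Sum>s\<in>b ` I. sqnorm I (\<lambda>i. if b i = s then x i else 0))"
proof -
  have "(\<Sum>s\<in>b ` I. sqnorm I (\<lambda>i. if b i = s then x i else 0))
      = (\<Sum>i\<in>I. \<Sum>s\<in>b ` I. if s = b i then (cmod (x i))\<^sup>2 else 0)"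
    unfolding sqnorm_def by (subst sum.swap) (intro sum.cong refl, auto)
  also have "\<dots> = sqnorm I x"
    unfolding sqnorm_def using assms by simp
  finally show ?thesis ..
qed

lemma Re_quad_form_block_lower_part_ge:
  assumes "finite I" and herm: "hermitian A I"
    and bound: "\<And>y. \<bar>Re (quad_form A I y)\<bar> \<le> r * sqnorm I y"
  shows "- r * sqnorm I x \<le> Re (quad_form (block_lower_part b A) I x)"
proof -
  let ?L = "block_lower_part b A"
  let ?D = "\<lambda>i j. if b i = b j then A i j else 0"
  have "quad_form A I x = quad_form (\<lambda>i j. ?L i j + cnj (?L j i) + ?D i j) I x"
  proof (intro quad_form_cong refl)
    fix i j assume "i \<in> I" "j \<in> I"
    then have "A i j = cnj (A j i)" using hermitianD[OF herm, of j i] by simp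
    then show "A i j = ?L i j + cnj (?L j i) + ?D i j"
      by (auto simp: block_lower_part_def)
  qed
  then have "Re (quad_form A I x) = 2 * Re (quad_form ?L I x) + Re (quad_form ?D I x)"
    by (simp add: quad_form_add quad_form_conj_transpose)
  moreover have "Re (quad_form ?D I x) \<le> r * sqnorm I x"
  proof -
    have "Re (quad_form ?D I x) = (\<Sum>s\<in>b ` I. Re (quad_form A I (\<lambda>i. if b i = s then x i else 0)))"
      unfolding quad_form_block_diagonal[OF assms(1)] Re_sum ..
    also have "\<dots> \<le> (\<Sum>s\<in>b ` I. r * sqnorm I (\<lambda>i. if b i = s then x i else 0))"
      by (intro sum_mono) (use bound abs_le_D1 in blast)
    also have "\<dots> = r * sqnorm I x"
      unfolding sqnorm_blocks[OF assms(1), of x b] sum_distrib_left ..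
    finally show ?thesis .
  qed
  moreover have "- r * sqnorm I x \<le> Re (quad_form A I x)"
    using bound[of x] by linarith
  ultimately show ?thesis by linarith
qed

lemma strictly_accretive_one_plus_block_lower:
  fixes A :: "complex mat"
  assumes A: "A \<in> carrier_mat n n" and herm: "hermitian (entries A) {0..<n}"
    and "0 \<le> \<beta>" and "\<beta> * spectral_radius A < 1"
  shows "strictly_accretive
    (\<lambda>i j. (if i = j then 1 else 0) + of_real \<beta> * block_lower_part b (entries A) i j) {0..<n}"
  unfolding strictly_accretive_def
proof (intro allI impI)
  fix x :: "nat \<Rightarrow> complex" assume "\<exists>i\<in>{0..<n}. x i \<noteq> 0"
  then have s: "0 < sqnorm {0..<n} x" by (auto intro: sqnorm_pos)
  define \<rho> where "\<rho> = spectral_radius A"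
  have "- \<rho> * sqnorm {0..<n} x \<le> Re (quad_form (block_lower_part b (entries A)) {0..<n} x)"
    unfolding \<rho>_def
    by (rule Re_quad_form_block_lower_part_ge[OF _ herm abs_Re_quad_form_le_spectral_radius[OF A herm]]) simp
  then have "\<beta> * (- \<rho> * sqnorm {0..<n} x) \<le> \<beta> * Re (quad_form (block_lower_part b (entries A)) {0..<n} x)"
    using assms(3) by (rule mult_left_mono)
  moreover have "\<beta> * \<rho> * sqnorm {0..<n} x < sqnorm {0..<n} x"
    using s assms(4) unfolding \<rho>_def by simp
  moreover have "Re (quad_form (\<lambda>i j. (if i = j then 1 else 0) + of_real \<beta> * block_lower_part b (entries A) i j) {0..<n} x)
      = sqnorm {0..<n} x + \<beta> * Re (quad_form (block_lower_part b (entries A)) {0..<n} x)"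
    by (simp add: quad_form_add quad_form_scale quad_form_one)
  ultimately show "0 < Re (quad_form (\<lambda>i j. (if i = j then 1 else 0) + of_real \<beta> * block_lower_part b (entries A) i j) {0..<n} x)"
    by (simp add: algebra_simps)
qed

section \<open>The block lower triangular preconditioner\<close>

lemma hermitian_of_real_symmetric:
  fixes B :: "real mat"
  assumes "B \<in> carrier_mat n n" and "transpose_mat B = B"
  shows "hermitian (entries (map_mat complex_of_real B)) {0..<n}"
  unfolding hermitian_def
proof (intro ballI)
  fix i j assume "i \<in> {0..<n}" "j \<in> {0..<n}"
  moreover from this have "B $$ (j, i) = B $$ (i, j)"
    using assms by (metis atLeastLessThan_iff carrier_matD index_transpose_mat(1))
  ultimately show "map_mat complex_of_real B $$ (j, i) = cnj (map_mat complex_of_real B $$ (i, j))"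
    using assms(1) by simp
qed

lemma lambda_min_eigenvalue:
  fixes B :: "real mat"
  assumes B: "B \<in> carrier_mat n n" and "transpose_mat B = B" and "0 < n"
  shows "eigenvalue B (lambda_min B)"
proof -
  define Bc where "Bc = map_mat complex_of_real B"
  have Bc: "Bc \<in> carrier_mat n n" using B by (simp add: Bc_def)
  obtain l where l: "eigenvalue Bc l"
    using spectrum_non_empty[OF Bc assms(3)] unfolding spectrum_def by auto
  then have "Im l = 0"
    using hermitian_eigenvalue_real[OF Bc] hermitian_of_real_symmetric[OF assms(1,2)] by (simp add: Bc_def)
  then have "eigenvalue B (Re l)"
    using l eigenvalue_map_of_real_iff[OF B] unfolding Bc_def by (metis complex_is_Real_iff of_real_Re)
  moreover have "finite {k. eigenvalue B k}"
    using card_finite_spectrum(1)[OF B] unfolding spectrum_def .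
  ultimately have "Min {k. eigenvalue B k} \<in> {k. eigenvalue B k}" by (intro Min_in) auto
  then show ?thesis unfolding lambda_min_def by simp
qed

lemma sum_list_positive:
  fixes ns :: "nat list"
  assumes "ns \<noteq> []" and "\<forall>m \<in> set ns. 0 < m"
  shows "0 < sum_list ns"
proof -
  obtain m where "m \<in> set ns" using assms(1) by (cases ns) auto
  then have "0 < m" and "m \<le> sum_list ns" using assms(2) by (auto intro: member_le_sum_list)
  then show ?thesis by linarith
qed

lemma strictly_accretive_block_preconditioner:
  fixes B :: "real mat"
  assumes B: "B \<in> carrier_mat n n" and "transpose_mat B = B"
    and "0 \<le> \<beta>" and "\<beta> * spectral_radius (map_mat complex_of_real B) < 1"
  shows "strictly_accretive (entries (map_mat complex_of_real (1\<^sub>m n + \<beta> \<cdot>\<^sub>m block_lower ns B))) {0..<n}"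
proof -
  define Bc where "Bc = map_mat complex_of_real B"
  have Bc: "Bc \<in> carrier_mat n n" using B by (simp add: Bc_def)
  have pos: "strictly_accretive
      (\<lambda>i j. (if i = j then 1 else 0) + of_real \<beta> * block_lower_part (block_of ns) (entries Bc) i j) {0..<n}"
    using strictly_accretive_one_plus_block_lower[OF Bc _ assms(3)] hermitian_of_real_symmetric[OF assms(1,2)]
      assms(4) unfolding Bc_def by blast
  have entries: "map_mat complex_of_real (1\<^sub>m n + \<beta> \<cdot>\<^sub>m block_lower ns B) $$ (i, j)
      = (if i = j then 1 else 0) + of_real \<beta> * block_lower_part (block_of ns) (entries Bc) i j"
    if "i \<in> {0..<n}" "j \<in> {0..<n}" for i j
    using B that by (simp add: Bc_def block_lower_def block_lower_part_def)
  show ?thesis using strictly_accretive_cong[THEN iffD2, OF entries pos] .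
qed

lemma mat_inverse_if_strictly_accretive:
  fixes M :: "real mat"
  assumes M: "M \<in> carrier_mat n n"
    and "strictly_accretive (entries (map_mat complex_of_real M)) {0..<n}"
  obtains Mi where "mat_inverse M = Some Mi" and "M * Mi = 1\<^sub>m n" and "Mi \<in> carrier_mat n n"
proof (cases "mat_inverse M")
  case None
  have "det (map_mat complex_of_real M) \<noteq> 0"
    using strictly_accretive_det_nonzero[OF _ assms(2)] M by simp
  then have "det M \<noteq> 0" by (simp add: of_real_hom.hom_det)
  then show ?thesis
    using mat_inverse(1)[OF M None, of "()"] det_non_zero_imp_unit[OF M, of "()"] by simp
next
  case (Some Mi)
  then show ?thesis using that mat_inverse(2)[OF M Some] by blast
qed

lemma block_preconditioner_factor:
  fixes B :: "real mat" and ns :: "nat list"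
  assumes B: "B \<in> carrier_mat n n" and "transpose_mat B = B"
    and "0 < \<beta>" and "\<beta> < 1 / spectral_radius (map_mat complex_of_real B)"
  defines "M \<equiv> 1\<^sub>m n + \<beta> \<cdot>\<^sub>m block_lower ns B"
  obtains Mi where "mat_inverse M = Some Mi" and "Mi \<in> carrier_mat n n"
    and "strictly_accretive (entries (map_mat complex_of_real M)) {0..<n}"
    and "map_mat complex_of_real B = map_mat complex_of_real M * map_mat complex_of_real (Mi * B)"
proof -
  have M: "M \<in> carrier_mat n n" using B by (simp add: M_def block_lower_def)
  have "0 < spectral_radius (map_mat complex_of_real B)"
  proof (rule ccontr)
    assume "\<not> 0 < spectral_radius (map_mat complex_of_real B)"
    then have "1 / spectral_radius (map_mat complex_of_real B) \<le> 0" by simp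
    then show False using assms(3,4) by linarith
  qed
  then have "\<beta> * spectral_radius (map_mat complex_of_real B) < 1"
    using assms(4) by (simp add: field_simps)
  then have pos: "strictly_accretive (entries (map_mat complex_of_real M)) {0..<n}"
    unfolding M_def using strictly_accretive_block_preconditioner[OF B assms(2)] assms(3) by simp
  then obtain Mi where Mi: "mat_inverse M = Some Mi" "M * Mi = 1\<^sub>m n" "Mi \<in> carrier_mat n n"
    using mat_inverse_if_strictly_accretive[OF M] by metis
  have "M * (Mi * B) = B"
    using M Mi B by (simp add: assoc_mult_mat[symmetric, of M n n Mi n B n])
  then have "map_mat complex_of_real B = map_mat complex_of_real M * map_mat complex_of_real (Mi * B)"
    using of_real_hom.mat_hom_mult[OF M mult_carrier_mat[OF Mi(3) B]] by simp
  with Mi(1,3) pos show ?thesis using that by blast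
qed

theorem lemma14:
  fixes ns :: "nat list" and n :: nat and B :: "real mat" and \<beta> :: real
  assumes "ns \<noteq> []"
    and "\<forall>m \<in> set ns. m > 0"
    and "sum_list ns = n"
    and "B \<in> carrier_mat n n"
    and "transpose_mat B = B"
    and "lambda_min B < 0"
    and "0 < \<beta>" and "\<beta> < 1 / spectral_radius (map_mat complex_of_real B)"
  shows "\<exists>k \<in> Omega. eigenvalue (map_mat complex_of_real
           (the (mat_inverse (1\<^sub>m n + \<beta> \<cdot>\<^sub>m block_lower ns B)) * B)) k"
proof (rule ccontr)
  assume no_eigenvalue: "\<not> ?thesis"
  define Bc where "Bc = map_mat complex_of_real B"
  have B: "B \<in> carrier_mat n n" and Bc: "Bc \<in> carrier_mat n n"
    using assms(4) by (auto simp: Bc_def)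
  obtain Mi where Mi: "mat_inverse (1\<^sub>m n + \<beta> \<cdot>\<^sub>m block_lower ns B) = Some Mi" "Mi \<in> carrier_mat n n"
    and pos: "strictly_accretive (entries (map_mat complex_of_real (1\<^sub>m n + \<beta> \<cdot>\<^sub>m block_lower ns B))) {0..<n}"
    and factor: "Bc = map_mat complex_of_real (1\<^sub>m n + \<beta> \<cdot>\<^sub>m block_lower ns B) * map_mat complex_of_real (Mi * B)"
    using block_preconditioner_factor[OF B assms(5,7,8)] unfolding Bc_def by metis
  have spectrum: "0 \<le> Re k" if "eigenvalue (map_mat complex_of_real (Mi * B)) k" for k
  proof -
    have "k \<notin> Omega" using no_eigenvalue that Mi(1) by auto
    then show ?thesis unfolding Omega_def by auto
  qed
  have "accretive (entries Bc) {0..<n}"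
    using hermitian_product_accretive[OF _ _ factor _ pos spectrum] hermitian_of_real_symmetric[OF B assms(5)]
      Mi(2) B unfolding Bc_def by (simp add: block_lower_def)
  moreover have "eigenvalue Bc (of_real (lambda_min B))"
    using lambda_min_eigenvalue[OF B assms(5) sum_list_positive[OF assms(1,2), unfolded assms(3)]]
      eigenvalue_map_of_real_iff[OF B] by (simp add: Bc_def)
  ultimately show False
    using accretive_eigenvalue_Re_nonneg[OF Bc] assms(6) by fastforce
qed

end
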